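(* Assume the Setting below together with (A-sub), (A-outer), (A-sing). Let $\hat{\mathcal P}$ be any affine subspace of $\mathbb R^d$. Then for every $h\in\mathcal H$, $$\|\Pi_{\hat{\mathcal P}}(g_h)-\mathbb Eg_h\|_2^2\le2\|g_h-\mathbb Eg_h\|_2^2+4\Big(\frac1{n-2f}+\frac{4\delta^2}{\sigma^2}\Big)\Big(\ell_t(\hat{\mathcal P})+\sum_{i\in\mathcal H}\|g_i-\mathbb Eg_i\|_2^2\Big).$$ Consequently, if $\mathbb E\|g_i-\mathbb Eg_i\|_2^2\le\epsilon^2$ for all $i\in\mathcal H$, then $\mathbb E\|\Pi_{\hat{\mathcal P}}(g_h)-\mathbb Eg_h\|_2^2\le2\epsilon^2+4\big(\frac1{n-2f}+\frac{4\delta^2}{\sigma^2}\big)\big(\mathbb E\ell_t(\hat{\mathcal P})+|\mathcal H|\epsilon^2\big)$.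
   Context: Setting: let $n,f,c,d$ be positive integers with $c\ge2$, $d\ge c$, $n-2f\ge1$. The index set $\{1,\dots,n\}$ is partitioned as $\mathcal H\sqcup\mathcal B$ (honest and Byzantine clients) with $|\mathcal B|\le f$. Each client $i$ has a vector $g_i\in\mathbb R^d$; for $i\in\mathcal H$, $\mathbb Eg_i\in\mathbb R^d$ denotes a fixed vector (the expectation of $g_i$), and $\mathbb E\mu=\frac1{|\mathcal H|}\sum_{i\in\mathcal H}\mathbb Eg_i$. A $k$-dimensional affine subspace is $\mathcal P=\{U\lambda+m:\lambda\in\mathbb R^k\}$ with $U\in\mathbb R^{d\times k}$ having orthonormal columns and $m\in\mathbb R^d$; its orthogonal projection is $\Pi_{\mathcal P}(w)=UU^\top(w-m)+m$. The trimmed reconstruction loss of an affine subspace $\mathcal P$ is $\ell_t(\mathcal P)=\min_{S\subseteq\{1,\dots,n\},\,|S|=n-f}\sum_{i\in S}\|g_i-\Pi_{\mathcal P}(g_i)\|_2^2$. Assumptions: (A-sub) there is a $(c-1)$-dimensional affine subspace $\mathcal P^*$ containing $\mathbb Eg_i$ for all $i\in\mathcal H$; (A-outer) $\|\mathbb Eg_i-\mathbb E\mu\|_2\le\delta$ for all $i\in\mathcal H$; (A-sing) for every $S\subseteq\mathcal H$ with $|S|=n-2f$, the $d\times(n-2f)$ matrix with columns $\mathbb Eg_s-\frac1{n-2f}\sum_{s'\in S}\mathbb Eg_{s'}$ ($s\in S$) has $(c-1)$-th largest singular value at least $\sigma>0$. *)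

theory Defs
  imports "HOL-Probability.Probability" "HOL-Library.Multiset" "Jordan_Normal_Form.Char_Poly"
begin

definition sqnorm :: "real vec \<Rightarrow> real" where
  "sqnorm v = v \<bullet> v"

definition orthonormal_cols :: "nat \<Rightarrow> nat \<Rightarrow> real mat \<Rightarrow> bool" where
  "orthonormal_cols d k U \<longleftrightarrow> U \<in> carrier_mat d k \<and> transpose_mat U * U = 1\<^sub>m k"

definition aff_set :: "real mat \<Rightarrow> real vec \<Rightarrow> real vec set" where
  "aff_set U m = {U *\<^sub>v lam + m | lam. lam \<in> carrier_vec (dim_col U)}"

definition proj_aff :: "real mat \<Rightarrow> real vec \<Rightarrow> real vec \<Rightarrow> real vec" where
  "proj_aff U m w = U *\<^sub>v (transpose_mat U *\<^sub>v (w - m)) + m"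

definition trimmed_loss :: "nat \<Rightarrow> nat \<Rightarrow> (nat \<Rightarrow> real vec) \<Rightarrow> real mat \<Rightarrow> real vec \<Rightarrow> real" where
  "trimmed_loss n f g U m =
     Min {(\<Sum>i\<in>S. sqnorm (g i - proj_aff U m (g i))) | S. S \<subseteq> {1..n} \<and> card S = n - f}"

definition vmean :: "nat \<Rightarrow> nat set \<Rightarrow> (nat \<Rightarrow> real vec) \<Rightarrow> real vec" where
  "vmean d A v = vec d (\<lambda>j. (\<Sum>i\<in>A. v i $ j) / real (card A))"

(* eigenvalues of a square real matrix (real roots of the characteristic polynomial,
   counted with algebraic multiplicity), listed in non-increasing order *)
definition eigenvalues_desc :: "real mat \<Rightarrow> real list" where
  "eigenvalues_desc M = rev (sorted_list_of_multiset (Abs_multiset (\<lambda>x. order x (char_poly M))))"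

(* k-th largest singular value (k >= 1) of a real matrix A: square root of the k-th largest
   eigenvalue of A^T A; by the usual convention it is 0 if k exceeds the number of them *)
definition kth_singular_value :: "real mat \<Rightarrow> nat \<Rightarrow> real" where
  "kth_singular_value A k =
     (let L = eigenvalues_desc (transpose_mat A * A)
      in if 1 \<le> k \<and> k \<le> length L then sqrt (L ! (k - 1)) else 0)"

definition centered_matrix :: "nat \<Rightarrow> nat set \<Rightarrow> (nat \<Rightarrow> real vec) \<Rightarrow> real mat" where
  "centered_matrix d S v = mat_of_cols d (map (\<lambda>s. v s - vmean d S v) (sorted_list_of_set S))"

end

theory Submission
  imports Defs
begin

text \<open>Pick n - 2f honest clients T among the n - f clients attaining the trimmed loss. The
  residual (with respect to the fitted subspace) of an honest mean splits into the residual of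
  the mean over T plus the residual of its offset from that mean, which lies in the true
  (c-1)-dimensional subspace. Over T the offsets average out, so the residuals of the means in T
  sum to |T| times the first part plus the spread of the offset residuals. The singular value
  assumption, transferred from Z^T Z to Z Z^T by Sylvester's determinant identity, bounds the
  residual of an offset of norm at most 2 \<delta> by 2 \<delta> / \<sigma> times the square root of that spread.
  Finally the residuals of the means in T are at most twice the trimmed loss plus twice the
  noise, and the bound in expectation follows by integrating the pointwise one.\<close>

unbundle no inner_syntax
unbundle no vec_syntax

lemma scalar_prod_self_nonneg: "0 \<le> (v :: real vec) \<bullet> v"
  using conjugate_square_ge_0_vec[of v] by simp

lemma sqnorm_nonneg: "0 \<le> sqnorm v"
  unfolding sqnorm_def by (rule scalar_prod_self_nonneg)

lemma scalar_prod_self_eq_0_iff: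
  "(v :: real vec) \<in> carrier_vec n \<Longrightarrow> v \<bullet> v = 0 \<longleftrightarrow> v = 0\<^sub>v n"
  using conjugate_square_eq_0_vec[of v n] by simp

lemma scalar_prod_add_self:
  fixes a b :: "real vec"
  assumes "a \<in> carrier_vec n" "b \<in> carrier_vec n"
  shows "(a + b) \<bullet> (a + b) = a \<bullet> a + 2 * (a \<bullet> b) + b \<bullet> b"
  using assms
  by (simp add: add_scalar_prod_distrib[of _ n] scalar_prod_add_distrib[of _ n] comm_scalar_prod[of b n a])

lemma scalar_prod_minus_self:
  fixes a b :: "real vec"
  assumes "a \<in> carrier_vec n" "b \<in> carrier_vec n"
  shows "(a - b) \<bullet> (a - b) = a \<bullet> a - 2 * (a \<bullet> b) + b \<bullet> b"
  using assms
  by (simp add: minus_scalar_prod_distrib[of _ n] scalar_prod_minus_distrib[of _ n] comm_scalar_prod[of b n a])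

lemma two_scalar_prod_le:
  fixes a b :: "real vec"
  assumes "a \<in> carrier_vec n" "b \<in> carrier_vec n"
  shows "2 * (a \<bullet> b) \<le> a \<bullet> a + b \<bullet> b"
  using scalar_prod_minus_self[OF assms] scalar_prod_self_nonneg[of "a - b"] by linarith

lemma scalar_prod_minus_self_le:
  fixes a b :: "real vec"
  assumes "a \<in> carrier_vec n" "b \<in> carrier_vec n"
  shows "(a - b) \<bullet> (a - b) \<le> 2 * (a \<bullet> a) + 2 * (b \<bullet> b)"
  using scalar_prod_minus_self[OF assms] scalar_prod_self_nonneg[of "a + b"]
    scalar_prod_add_self[OF assms] by linarith

lemma quadratic_form_symmetric:
  fixes N :: "real mat"
  assumes N: "N \<in> carrier_mat r r" and sym: "transpose_mat N = N"
    and x: "x \<in> carrier_vec r" and y: "y \<in> carrier_vec r"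
  shows "y \<bullet> (N *\<^sub>v x) = x \<bullet> (N *\<^sub>v y)"
proof -
  have "y \<bullet> (N *\<^sub>v x) = (transpose_mat N *\<^sub>v y) \<bullet> x"
    using transpose_vec_mult_scalar[OF N x y] by simp
  also have "\<dots> = x \<bullet> (N *\<^sub>v y)"
    using sym N x y by (subst comm_scalar_prod[of _ r]) auto
  finally show ?thesis .
qed

lemma quadratic_form_add_smult:
  fixes N :: "real mat"
  assumes N: "N \<in> carrier_mat r r" and sym: "transpose_mat N = N"
    and x: "x \<in> carrier_vec r" and y: "y \<in> carrier_vec r"
  shows "(y + a \<cdot>\<^sub>v x) \<bullet> (N *\<^sub>v (y + a \<cdot>\<^sub>v x))
     = y \<bullet> (N *\<^sub>v y) + 2 * a * (y \<bullet> (N *\<^sub>v x)) + a\<^sup>2 * (x \<bullet> (N *\<^sub>v x))"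
proof -
  have "N *\<^sub>v (y + a \<cdot>\<^sub>v x) = N *\<^sub>v y + a \<cdot>\<^sub>v (N *\<^sub>v x)"
    using N x y by (simp add: mult_add_distrib_mat_vec[OF N] mult_mat_vec[OF N])
  then have "(y + a \<cdot>\<^sub>v x) \<bullet> (N *\<^sub>v (y + a \<cdot>\<^sub>v x))
     = y \<bullet> (N *\<^sub>v y) + a * (y \<bullet> (N *\<^sub>v x)) + a * (x \<bullet> (N *\<^sub>v y)) + a * a * (x \<bullet> (N *\<^sub>v x))"
    using N x y
    by (simp add: add_scalar_prod_distrib[of _ r] scalar_prod_add_distrib[of _ r] algebra_simps)
  then show ?thesis
    using quadratic_form_symmetric[OF N sym x y] by (simp add: power2_eq_square algebra_simps)
qed

lemma psd_cauchy_schwarz: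
  fixes N :: "real mat"
  assumes N: "N \<in> carrier_mat r r" and sym: "transpose_mat N = N"
    and psd: "\<And>u. u \<in> carrier_vec r \<Longrightarrow> 0 \<le> u \<bullet> (N *\<^sub>v u)"
    and x: "x \<in> carrier_vec r" and y: "y \<in> carrier_vec r"
  shows "(y \<bullet> (N *\<^sub>v x))\<^sup>2 \<le> (y \<bullet> (N *\<^sub>v y)) * (x \<bullet> (N *\<^sub>v x))"
proof -
  define a b c where "a = x \<bullet> (N *\<^sub>v x)" and "b = y \<bullet> (N *\<^sub>v x)" and "c = y \<bullet> (N *\<^sub>v y)"
  have q: "0 \<le> c + 2 * t * b + t\<^sup>2 * a" for t
    using psd[of "y + t \<cdot>\<^sub>v x"] quadratic_form_add_smult[OF N sym x y, of t] x y
    unfolding a_def b_def c_def by auto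
  have "b\<^sup>2 \<le> c * a"
  proof (cases "a = 0")
    case True
    have "b = 0"
    proof (rule ccontr)
      assume "b \<noteq> 0"
      then have "c + 2 * (- (c + 1) / (2 * b)) * b = -1" by (simp add: field_simps)
      then show False using q[of "- (c + 1) / (2 * b)"] True by simp
    qed
    then show ?thesis using True by simp
  next
    case False
    then have ap: "0 < a" using psd[OF x] unfolding a_def by simp
    have "0 \<le> c + 2 * (- b / a) * b + (- b / a)\<^sup>2 * a" using q .
    also have "\<dots> = c - b\<^sup>2 / a" using ap by (simp add: field_simps power2_eq_square)
    finally show ?thesis using ap by (simp add: field_simps)
  qed
  then show ?thesis unfolding a_def b_def c_def .
qed

lemma cauchy_schwarz_scalar_prod:
  fixes x y :: "real vec"
  assumes x: "x \<in> carrier_vec r" and y: "y \<in> carrier_vec r"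
  shows "(y \<bullet> x)\<^sup>2 \<le> (y \<bullet> y) * (x \<bullet> x)"
  using psd_cauchy_schwarz[OF one_carrier_mat _ _ x y] x y
  by (simp add: scalar_prod_self_nonneg)

lemma quadratic_form_abs_le:
  fixes B :: "real mat"
  assumes B: "B \<in> carrier_mat r r" and x: "x \<in> carrier_vec r"
  shows "\<bar>x \<bullet> (B *\<^sub>v x)\<bar> \<le> (\<Sum>i<r. \<Sum>j<r. \<bar>B $$ (i,j)\<bar>) * (x \<bullet> x)"
proof -
  have xx: "x \<bullet> x = (\<Sum>k<r. x $ k * x $ k)"
    using x by (simp add: scalar_prod_def lessThan_atLeast0)
  have expand: "x \<bullet> (B *\<^sub>v x) = (\<Sum>i<r. \<Sum>j<r. x $ i * B $$ (i,j) * x $ j)"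
    using B x by (simp add: scalar_prod_def lessThan_atLeast0 sum_distrib_left row_def mult.assoc)
  have sq: "x $ k * x $ k \<le> x \<bullet> x" if "k < r" for k
    unfolding xx by (rule member_le_sum) (use that in auto)
  have entry: "\<bar>x $ i * x $ j\<bar> \<le> x \<bullet> x" if "i < r" "j < r" for i j
  proof -
    have "2 * \<bar>x $ i * x $ j\<bar> \<le> x $ i * x $ i + x $ j * x $ j"
      using zero_le_power2[of "\<bar>x $ i\<bar> - \<bar>x $ j\<bar>"]
      by (simp add: power2_eq_square abs_mult algebra_simps abs_mult_self_eq)
    then show ?thesis using sq[of i] sq[of j] that by linarith
  qed
  have "\<bar>x \<bullet> (B *\<^sub>v x)\<bar> \<le> (\<Sum>i<r. \<Sum>j<r. \<bar>B $$ (i,j)\<bar> * \<bar>x $ i * x $ j\<bar>)"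
    unfolding expand
    by (rule order.trans[OF sum_abs], rule sum_mono, rule order.trans[OF sum_abs]) (simp add: abs_mult mult_ac)
  also have "\<dots> \<le> (\<Sum>i<r. \<Sum>j<r. \<bar>B $$ (i,j)\<bar> * (x \<bullet> x))"
    by (intro sum_mono mult_left_mono entry) auto
  also have "\<dots> = (\<Sum>i<r. \<Sum>j<r. \<bar>B $$ (i,j)\<bar>) * (x \<bullet> x)"
    by (simp add: sum_distrib_right)
  finally show ?thesis .
qed

lemma psd_det_nonzero_coercive:
  fixes N :: "real mat"
  assumes N: "N \<in> carrier_mat r r" and sym: "transpose_mat N = N"
    and psd: "\<And>u. u \<in> carrier_vec r \<Longrightarrow> 0 \<le> u \<bullet> (N *\<^sub>v u)"
    and det: "Determinant.det N \<noteq> 0"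
  shows "\<exists>K>0. \<forall>x\<in>carrier_vec r. x \<bullet> x \<le> K * (x \<bullet> (N *\<^sub>v x))"
proof -
  obtain B where B: "B \<in> carrier_mat r r" and NB: "N * B = 1\<^sub>m r"
    using det_non_zero_imp_unit[OF N det, of "()"] unfolding Units_def ring_mat_def by auto
  define K where "K = (\<Sum>i<r. \<Sum>j<r. \<bar>B $$ (i,j)\<bar>) + 1"
  have K0: "0 < K" unfolding K_def by (simp add: add_nonneg_pos sum_nonneg)
  have "x \<bullet> x \<le> K * (x \<bullet> (N *\<^sub>v x))" if x: "x \<in> carrier_vec r" for x
  proof -
    define y where "y = B *\<^sub>v x"
    have y: "y \<in> carrier_vec r" unfolding y_def using B x by auto
    have Ny: "N *\<^sub>v y = x" unfolding y_def using NB B N x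
      by (metis assoc_mult_mat_vec one_mult_mat_vec)
    have "(x \<bullet> x)\<^sup>2 = (y \<bullet> (N *\<^sub>v x))\<^sup>2"
      using quadratic_form_symmetric[OF N sym y x] Ny x by (simp add: comm_scalar_prod[of _ r])
    also have "\<dots> \<le> (y \<bullet> x) * (x \<bullet> (N *\<^sub>v x))"
      using psd_cauchy_schwarz[OF N sym psd x y] by (simp add: Ny)
    also have "y \<bullet> x = x \<bullet> (B *\<^sub>v x)"
      unfolding y_def using x B by (simp add: comm_scalar_prod[of _ r])
    also have "\<dots> \<le> K * (x \<bullet> x)"
      using quadratic_form_abs_le[OF B x] scalar_prod_self_nonneg[of x] unfolding K_def
      by (simp add: distrib_right)
    finally have "(x \<bullet> x) * (x \<bullet> x) \<le> (x \<bullet> x) * (K * (x \<bullet> (N *\<^sub>v x)))"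
      using psd[OF x] by (simp add: power2_eq_square mult_ac mult_right_mono order_trans)
    then show ?thesis
      using psd[OF x] K0 scalar_prod_self_nonneg[of x]
      by (cases "x \<bullet> x = 0") (auto simp: mult_le_cancel_left)
  qed
  with K0 show ?thesis by blast
qed

lemma quadratic_form_greatest_lower_bound:
  fixes S :: "real mat" and q :: "real vec"
  assumes S: "S \<in> carrier_mat r r" and q: "q \<in> carrier_vec r" "q \<noteq> 0\<^sub>v r"
  obtains t where "\<And>x. x \<in> carrier_vec r \<Longrightarrow> t * (x \<bullet> x) \<le> x \<bullet> (S *\<^sub>v x)"
    and "\<And>t'. (\<And>x. x \<in> carrier_vec r \<Longrightarrow> t' * (x \<bullet> x) \<le> x \<bullet> (S *\<^sub>v x)) \<Longrightarrow> t' \<le> t"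
proof -
  define F where "F = {t. \<forall>x\<in>carrier_vec r. t * (x \<bullet> x) \<le> x \<bullet> (S *\<^sub>v x)}"
  have "- (\<Sum>i<r. \<Sum>j<r. \<bar>S $$ (i,j)\<bar>) \<in> F"
    unfolding F_def using quadratic_form_abs_le[OF S] by (force simp: abs_le_iff)
  then have F_ne: "F \<noteq> {}" by auto
  have q0: "0 < q \<bullet> q"
    using q scalar_prod_self_nonneg[of q] scalar_prod_self_eq_0_iff[OF q(1)] by linarith
  have "t \<le> (q \<bullet> (S *\<^sub>v q)) / (q \<bullet> q)" if "t \<in> F" for t
    using that q q0 unfolding F_def by (simp add: le_divide_eq)
  then have bdd: "bdd_above F" unfolding bdd_above_def by blast
  have Sup_lower: "Sup F * (x \<bullet> x) \<le> x \<bullet> (S *\<^sub>v x)" if x: "x \<in> carrier_vec r" for x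
  proof (cases "x = 0\<^sub>v r")
    case True
    then show ?thesis using S by simp
  next
    case False
    then have x0: "0 < x \<bullet> x"
      using x scalar_prod_self_nonneg[of x] scalar_prod_self_eq_0_iff[OF x] by linarith
    have "Sup F \<le> (x \<bullet> (S *\<^sub>v x)) / (x \<bullet> x)"
      using F_ne x x0 unfolding F_def by (intro cSup_least) (auto simp: le_divide_eq)
    then show ?thesis using x0 by (simp add: le_divide_eq)
  qed
  show ?thesis
    using that[of "Sup F"] Sup_lower cSup_upper[OF _ bdd] unfolding F_def by auto
qed

lemma quadratic_form_minus_smult_one:
  fixes S :: "real mat"
  assumes S: "S \<in> carrier_mat r r" and x: "x \<in> carrier_vec r"
  shows "x \<bullet> ((S - t \<cdot>\<^sub>m 1\<^sub>m r) *\<^sub>v x) = x \<bullet> (S *\<^sub>v x) - t * (x \<bullet> x)"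
proof -
  have "(t \<cdot>\<^sub>m 1\<^sub>m r) *\<^sub>v x = t \<cdot>\<^sub>v x" using x
    by (intro eq_vecI) (auto simp: scalar_prod_def if_distrib if_distribR cong: if_cong)
  then have "(S - t \<cdot>\<^sub>m 1\<^sub>m r) *\<^sub>v x = S *\<^sub>v x - t \<cdot>\<^sub>v x" using S x
    by (simp add: minus_mult_distrib_mat_vec)
  then show ?thesis using S x by (simp add: scalar_prod_minus_distrib[of _ r])
qed

text \<open>The best lower bound t of the Rayleigh quotient is an eigenvalue: S - t I is positive
  semidefinite, and if it were invertible it would be coercive, so t could be raised.\<close>

lemma symmetric_char_poly_root_below:
  fixes S :: "real mat"
  assumes S: "S \<in> carrier_mat r r" and sym: "transpose_mat S = S"
    and q: "q \<in> carrier_vec r" and lt: "q \<bullet> (S *\<^sub>v q) < s * (q \<bullet> q)"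
  shows "\<exists>t<s. poly (char_poly S) t = 0"
proof -
  have "q \<noteq> 0\<^sub>v r" using lt S by auto
  then obtain t where lower: "\<And>x. x \<in> carrier_vec r \<Longrightarrow> t * (x \<bullet> x) \<le> x \<bullet> (S *\<^sub>v x)"
    and greatest: "\<And>t'. (\<And>x. x \<in> carrier_vec r \<Longrightarrow> t' * (x \<bullet> x) \<le> x \<bullet> (S *\<^sub>v x)) \<Longrightarrow> t' \<le> t"
    using quadratic_form_greatest_lower_bound[OF S q] by blast
  have "t < s"
    using lower[OF q] lt scalar_prod_self_nonneg[of q] by (smt (verit) mult_right_mono)
  define N where "N = S - t \<cdot>\<^sub>m 1\<^sub>m r"
  have N: "N \<in> carrier_mat r r" unfolding N_def using S by auto
  have N_sym: "transpose_mat N = N"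
    unfolding N_def using S sym by (intro eq_matI) (auto simp: mat_eq_iff)
  have N_form: "x \<bullet> (N *\<^sub>v x) = x \<bullet> (S *\<^sub>v x) - t * (x \<bullet> x)" if "x \<in> carrier_vec r" for x
    unfolding N_def using quadratic_form_minus_smult_one[OF S that] .
  have "Determinant.det N = 0"
  proof (rule ccontr)
    assume "Determinant.det N \<noteq> 0"
    then obtain K where K: "0 < K" "\<And>x. x \<in> carrier_vec r \<Longrightarrow> x \<bullet> x \<le> K * (x \<bullet> (N *\<^sub>v x))"
      using psd_det_nonzero_coercive[OF N N_sym] lower N_form by fastforce
    have "(t + 1 / K) * (x \<bullet> x) \<le> x \<bullet> (S *\<^sub>v x)" if x: "x \<in> carrier_vec r" for x
      using K(2)[OF x] K(1) N_form[OF x] by (simp add: field_simps)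
    then have "t + 1 / K \<le> t" by (rule greatest)
    then show False using K by simp
  qed
  moreover have "char_matrix S t = N" unfolding char_matrix_def N_def using S
    by (intro eq_matI) auto
  ultimately have "poly (char_poly S) t = 0"
    using eigenvalue_det[OF S] eigenvalue_root_char_poly[OF S] by simp
  with \<open>t < s\<close> show ?thesis by blast
qed

lemma poly_char_poly_eq_det:
  fixes A :: "real mat"
  assumes A: "A \<in> carrier_mat n n"
  shows "poly (char_poly A) x = Determinant.det (x \<cdot>\<^sub>m 1\<^sub>m n - A)"
proof -
  have "- char_matrix A x = x \<cdot>\<^sub>m 1\<^sub>m n - A"
    using A unfolding char_matrix_def by (intro eq_matI) auto
  then show ?thesis using char_poly_matrix[OF A] by simp
qed

text \<open>Sylvester's determinant identity: eliminate either off-diagonal block of the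
  block matrix [x I, Z; Z^T, I].\<close>

lemma det_sylvester:
  fixes Z :: "real mat"
  assumes Z: "Z \<in> carrier_mat r m"
  shows "x ^ r * Determinant.det (x \<cdot>\<^sub>m 1\<^sub>m m - transpose_mat Z * Z)
       = x ^ m * Determinant.det (x \<cdot>\<^sub>m 1\<^sub>m r - Z * transpose_mat Z)"
proof -
  have ZT: "transpose_mat Z \<in> carrier_mat m r" using Z by auto
  define K where "K = four_block_mat (x \<cdot>\<^sub>m 1\<^sub>m r) Z (transpose_mat Z) (1\<^sub>m m)"
  define L1 where "L1 = four_block_mat (1\<^sub>m r) (- Z) (0\<^sub>m m r) (x \<cdot>\<^sub>m 1\<^sub>m m)"
  define L2 where "L2 = four_block_mat (1\<^sub>m r) (0\<^sub>m r m) (- transpose_mat Z) (x \<cdot>\<^sub>m 1\<^sub>m m)"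
  have K: "K \<in> carrier_mat (r+m) (r+m)" unfolding K_def using Z ZT by auto
  have L1: "L1 \<in> carrier_mat (r+m) (r+m)" unfolding L1_def using Z ZT by auto
  have L2: "L2 \<in> carrier_mat (r+m) (r+m)" unfolding L2_def using Z ZT by auto
  have L1K: "L1 * K = four_block_mat (x \<cdot>\<^sub>m 1\<^sub>m r - Z * transpose_mat Z) (0\<^sub>m r m)
                   (x \<cdot>\<^sub>m transpose_mat Z) (x \<cdot>\<^sub>m 1\<^sub>m m)"
    unfolding L1_def K_def using Z ZT
    by (subst mult_four_block_mat[of _ r r _ m _ m _ _ r]) auto
  have "Determinant.det (L1 * K) = x ^ m * Determinant.det (x \<cdot>\<^sub>m 1\<^sub>m r - Z * transpose_mat Z)"
    unfolding L1K by (subst det_four_block_mat_upper_right_zero[of _ r _ m]) (use Z in auto)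
  moreover have "Determinant.det L1 = x ^ m"
    unfolding L1_def by (subst det_four_block_mat_lower_left_zero[of _ r _ m]) (use Z in auto)
  ultimately have e1: "x ^ m * Determinant.det K = x ^ m * Determinant.det (x \<cdot>\<^sub>m 1\<^sub>m r - Z * transpose_mat Z)"
    using det_mult[OF L1 K] by simp
  have L2K: "L2 * K = four_block_mat (x \<cdot>\<^sub>m 1\<^sub>m r) Z (0\<^sub>m m r) (x \<cdot>\<^sub>m 1\<^sub>m m - transpose_mat Z * Z)"
    unfolding L2_def K_def using Z ZT
    by (subst mult_four_block_mat[of _ r r _ m _ m _ _ r]) auto
  have "Determinant.det (L2 * K) = x ^ r * Determinant.det (x \<cdot>\<^sub>m 1\<^sub>m m - transpose_mat Z * Z)"
    unfolding L2K by (subst det_four_block_mat_lower_left_zero[of _ r _ m]) (use Z in auto)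
  moreover have "Determinant.det L2 = x ^ m"
    unfolding L2_def by (subst det_four_block_mat_upper_right_zero[of _ r _ m]) (use Z in auto)
  ultimately have e2: "x ^ m * Determinant.det K = x ^ r * Determinant.det (x \<cdot>\<^sub>m 1\<^sub>m m - transpose_mat Z * Z)"
    using det_mult[OF L2 K] by simp
  show ?thesis using e1 e2 by simp
qed

lemma char_poly_gram_sylvester:
  fixes Z :: "real mat"
  assumes Z: "Z \<in> carrier_mat r m"
  shows "monom 1 r * char_poly (transpose_mat Z * Z) = monom 1 m * char_poly (Z * transpose_mat Z)"
proof -
  have "poly (monom 1 r * char_poly (transpose_mat Z * Z)) x
      = poly (monom 1 m * char_poly (Z * transpose_mat Z)) x" for x
    using det_sylvester[OF Z, of x] Z
    by (simp add: poly_char_poly_eq_det[of _ m] poly_char_poly_eq_det[of _ r] poly_monom)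
  then have "poly (monom 1 r * char_poly (transpose_mat Z * Z))
           = poly (monom 1 m * char_poly (Z * transpose_mat Z))" by blast
  then show ?thesis by (simp only: poly_eq_poly_eq_iff)
qed

lemma proots_monom_one: "proots (monom (1::real) k) = replicate_mset k 0"
  using proots_linear_factor[of "0::real"] by (simp add: monom_altdef proots_power)

lemma char_poly_nonzero: "A \<in> carrier_mat n n \<Longrightarrow> char_poly (A :: real mat) \<noteq> 0"
  using degree_monic_char_poly[of A n] by auto

lemma filter_proots_char_poly_gram:
  fixes Z :: "real mat"
  assumes Z: "Z \<in> carrier_mat r m" and P0: "\<not> P 0"
  shows "filter_mset P (proots (char_poly (transpose_mat Z * Z)))
       = filter_mset P (proots (char_poly (Z * transpose_mat Z)))"
proof -
  have nz: "char_poly (transpose_mat Z * Z) \<noteq> 0" "char_poly (Z * transpose_mat Z) \<noteq> 0"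
    using Z by (auto intro!: char_poly_nonzero)
  have "replicate_mset r 0 + proots (char_poly (transpose_mat Z * Z))
      = replicate_mset m 0 + proots (char_poly (Z * transpose_mat Z))"
    using arg_cong[OF char_poly_gram_sylvester[OF Z], of proots] nz
    by (simp add: proots_mult proots_monom_one monom_eq_0_iff)
  moreover have "filter_mset P (replicate_mset k 0) = {#}" for k
    using P0 by (induct k) auto
  ultimately show ?thesis
    by (metis filter_union_mset add.left_neutral)
qed

lemma eigenvalues_desc_eq:
  assumes "A \<in> carrier_mat n n"
  shows "eigenvalues_desc A = rev (sorted_list_of_multiset (proots (char_poly A)))"
proof -
  have "(\<lambda>x. order x (char_poly A)) = count (proots (char_poly A))"
    using char_poly_nonzero[OF assms] by (auto simp: fun_eq_iff)
  then show ?thesis unfolding eigenvalues_desc_def by (simp add: count_inverse)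
qed

lemma kth_singular_value_ge_count:
  fixes Y :: "real mat"
  assumes \<sigma>: "0 < \<sigma>" "\<sigma> \<le> kth_singular_value Y r" and r: "1 \<le> r"
  shows "r \<le> size (filter_mset (\<lambda>x. \<sigma>\<^sup>2 \<le> x) (proots (char_poly (transpose_mat Y * Y))))"
proof -
  define R where "R = proots (char_poly (transpose_mat Y * Y))"
  define L where "L = rev (sorted_list_of_multiset R)"
  have "eigenvalues_desc (transpose_mat Y * Y) = L"
    unfolding L_def R_def by (rule eigenvalues_desc_eq) auto
  then have rL: "r \<le> length L" and sq: "\<sigma> \<le> sqrt (L ! (r - 1))"
    using \<sigma> r unfolding kth_singular_value_def Let_def by (auto split: if_splits)
  have "\<sigma>\<^sup>2 \<le> L ! (r - 1)"
  proof -
    have "0 < L ! (r - 1)" using sq \<sigma>(1) by (metis order_less_le_trans real_sqrt_gt_0_iff)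
    moreover have "\<sigma>\<^sup>2 \<le> (sqrt (L ! (r - 1)))\<^sup>2" using sq \<sigma>(1) by (simp add: power_mono)
    ultimately show ?thesis by simp
  qed
  moreover have "L ! (r - 1) \<le> L ! j" if "j < r" for j
  proof -
    define sl where "sl = sorted_list_of_multiset R"
    have "sl ! (length sl - Suc (r - 1)) \<le> sl ! (length sl - Suc j)"
      by (rule sorted_nth_mono) (use that rL r in \<open>auto simp: sl_def L_def\<close>)
    then show ?thesis using that rL r unfolding L_def sl_def[symmetric] by (simp add: rev_nth)
  qed
  ultimately have "{0..<r} \<subseteq> {i. i < length L \<and> \<sigma>\<^sup>2 \<le> L ! i}"
    using rL by (auto intro: order_trans)
  then have "r \<le> length (filter (\<lambda>x. \<sigma>\<^sup>2 \<le> x) L)"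
    using card_mono[of "{i. i < length L \<and> \<sigma>\<^sup>2 \<le> L ! i}" "{0..<r}"]
    by (simp add: length_filter_conv_card)
  also have "\<dots> = size (filter_mset (\<lambda>x. \<sigma>\<^sup>2 \<le> x) R)"
    unfolding L_def by (metis mset_filter mset_rev mset_sorted_list_of_multiset size_mset)
  finally show ?thesis unfolding R_def .
qed

text \<open>Z^T Z and Z Z^T have the same nonzero eigenvalues, so at least r of the at most r roots of
  the characteristic polynomial of Z Z^T are at least \<sigma>^2; an eigenvalue below \<sigma>^2 would be
  one root too many.\<close>

lemma gram_quadratic_form_ge:
  fixes Z Y :: "real mat"
  assumes Z: "Z \<in> carrier_mat r m" and r: "1 \<le> r" and \<sigma>: "0 < \<sigma>"
    and YZ: "transpose_mat Y * Y = transpose_mat Z * Z"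
    and sv: "\<sigma> \<le> kth_singular_value Y r"
    and q: "q \<in> carrier_vec r"
  shows "\<sigma>\<^sup>2 * (q \<bullet> q) \<le> (transpose_mat Z *\<^sub>v q) \<bullet> (transpose_mat Z *\<^sub>v q)"
proof (rule ccontr)
  define S where "S = Z * transpose_mat Z"
  define P where "P = (\<lambda>x::real. \<sigma>\<^sup>2 \<le> x)"
  have S: "S \<in> carrier_mat r r" unfolding S_def using Z by auto
  have S_sym: "transpose_mat S = S" unfolding S_def using Z by (simp add: transpose_mult[of _ r m])
  have "q \<bullet> (S *\<^sub>v q) = (transpose_mat Z *\<^sub>v q) \<bullet> (transpose_mat Z *\<^sub>v q)"
    unfolding S_def using Z q transpose_vec_mult_scalar[OF Z _ q, of "transpose_mat Z *\<^sub>v q"]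
    by (simp add: assoc_mult_mat_vec[of _ r m _ r])
  moreover assume "\<not> ?thesis"
  ultimately obtain t where t: "t < \<sigma>\<^sup>2" "poly (char_poly S) t = 0"
    using symmetric_char_poly_root_below[OF S S_sym q] by force
  have nz: "char_poly S \<noteq> 0" using char_poly_nonzero[OF S] .
  have "r \<le> size (filter_mset P (proots (char_poly S)))"
    using kth_singular_value_ge_count[OF \<sigma> sv r] filter_proots_char_poly_gram[OF Z, of P] \<sigma>
    unfolding YZ S_def P_def by simp
  moreover have "filter_mset (\<lambda>x. \<not> P x) (proots (char_poly S)) \<noteq> {#}"
  proof -
    have "t \<in># filter_mset (\<lambda>x. \<not> P x) (proots (char_poly S))"
      using t nz unfolding P_def by simp
    then show ?thesis by auto
  qed
  then have "0 < size (filter_mset (\<lambda>x. \<not> P x) (proots (char_poly S)))"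
    by (metis nonempty_has_size)
  moreover have "size (proots (char_poly S)) \<le> r"
    using size_proots_le[of "char_poly S"] degree_monic_char_poly[OF S] by simp
  moreover have "size (proots (char_poly S))
      = size (filter_mset P (proots (char_poly S))) + size (filter_mset (\<lambda>x. \<not> P x) (proots (char_poly S)))"
    by (metis multiset_partition size_union)
  ultimately show False by linarith
qed

definition orth_resid :: "real mat \<Rightarrow> real vec \<Rightarrow> real vec" where
  "orth_resid U x = x - U *\<^sub>v (transpose_mat U *\<^sub>v x)"

context
  fixes U :: "real mat" and d k :: nat
  assumes U: "orthonormal_cols d k U"
begin

lemma orthonormal_cols_carrier: "U \<in> carrier_mat d k"
  using U unfolding orthonormal_cols_def by simp

lemma transpose_mult_vec_cancel: "v \<in> carrier_vec k \<Longrightarrow> transpose_mat U *\<^sub>v (U *\<^sub>v v) = v"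
  using U unfolding orthonormal_cols_def
  by (metis assoc_mult_mat_vec one_mult_mat_vec transpose_carrier_mat)

lemma mult_vec_scalar_prod_transpose:
  "v \<in> carrier_vec k \<Longrightarrow> w \<in> carrier_vec d \<Longrightarrow> (U *\<^sub>v v) \<bullet> w = v \<bullet> (transpose_mat U *\<^sub>v w)"
  using transpose_vec_mult_scalar[of "transpose_mat U" k d w v] orthonormal_cols_carrier by simp

lemma mult_vec_scalar_prod_mult_vec:
  "v \<in> carrier_vec k \<Longrightarrow> w \<in> carrier_vec k \<Longrightarrow> (U *\<^sub>v v) \<bullet> (U *\<^sub>v w) = v \<bullet> w"
  using mult_vec_scalar_prod_transpose[of v "U *\<^sub>v w"] transpose_mult_vec_cancel[of w]
    orthonormal_cols_carrier by simp

lemma orth_resid_carrier [simp]: "x \<in> carrier_vec d \<Longrightarrow> orth_resid U x \<in> carrier_vec d"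
  unfolding orth_resid_def using orthonormal_cols_carrier by auto

lemma orth_resid_scalar_prod_right:
  assumes x: "x \<in> carrier_vec d" and y: "y \<in> carrier_vec d"
  shows "orth_resid U x \<bullet> y = x \<bullet> y - (transpose_mat U *\<^sub>v x) \<bullet> (transpose_mat U *\<^sub>v y)"
  unfolding orth_resid_def using x y orthonormal_cols_carrier
  by (simp add: minus_scalar_prod_distrib[of _ d] mult_vec_scalar_prod_transpose)

lemma orth_resid_scalar_prod:
  assumes x: "x \<in> carrier_vec d" and y: "y \<in> carrier_vec d"
  shows "orth_resid U x \<bullet> orth_resid U y = orth_resid U x \<bullet> y"
proof -
  have Uy: "U *\<^sub>v (transpose_mat U *\<^sub>v y) \<in> carrier_vec d"
    using y orthonormal_cols_carrier by auto
  have "orth_resid U x \<bullet> (U *\<^sub>v (transpose_mat U *\<^sub>v y)) = 0"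
    using x y orthonormal_cols_carrier
    by (simp add: orth_resid_scalar_prod_right[OF x Uy] transpose_mult_vec_cancel
        mult_vec_scalar_prod_transpose comm_scalar_prod[of x d] comm_scalar_prod[of _ k])
  then show ?thesis
    unfolding orth_resid_def[of U y] using x y Uy
    by (simp add: scalar_prod_minus_distrib[of _ d])
qed

lemma orth_resid_self:
  "x \<in> carrier_vec d \<Longrightarrow>
     orth_resid U x \<bullet> orth_resid U x = x \<bullet> x - (transpose_mat U *\<^sub>v x) \<bullet> (transpose_mat U *\<^sub>v x)"
  using orth_resid_scalar_prod orth_resid_scalar_prod_right by simp

lemma orth_resid_self_le: "x \<in> carrier_vec d \<Longrightarrow> orth_resid U x \<bullet> orth_resid U x \<le> x \<bullet> x"
  using orth_resid_self scalar_prod_self_nonneg by fastforce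

lemma projection_self_le:
  assumes "x \<in> carrier_vec d"
  shows "(U *\<^sub>v (transpose_mat U *\<^sub>v x)) \<bullet> (U *\<^sub>v (transpose_mat U *\<^sub>v x)) \<le> x \<bullet> x"
  using orth_resid_self[OF assms] scalar_prod_self_nonneg[of "orth_resid U x"] assms
    mult_vec_scalar_prod_mult_vec orthonormal_cols_carrier by auto

lemma orth_resid_add:
  "x \<in> carrier_vec d \<Longrightarrow> y \<in> carrier_vec d \<Longrightarrow> orth_resid U (x + y) = orth_resid U x + orth_resid U y"
  unfolding orth_resid_def using orthonormal_cols_carrier
  by (intro eq_vecI) (auto simp: mult_add_distrib_mat_vec[of _ k d] mult_add_distrib_mat_vec[of _ d k]
      scalar_prod_add_distrib[of _ d])

lemma orth_resid_minus:
  "x \<in> carrier_vec d \<Longrightarrow> y \<in> carrier_vec d \<Longrightarrow> orth_resid U (x - y) = orth_resid U x - orth_resid U y"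
  unfolding orth_resid_def using orthonormal_cols_carrier
  by (intro eq_vecI) (auto simp: mult_minus_distrib_mat_vec[of _ k d] mult_minus_distrib_mat_vec[of _ d k]
      scalar_prod_minus_distrib[of _ d])

lemma residual_proj_aff:
  "x \<in> carrier_vec d \<Longrightarrow> m \<in> carrier_vec d \<Longrightarrow> x - proj_aff U m x = orth_resid U (x - m)"
  unfolding proj_aff_def orth_resid_def using orthonormal_cols_carrier by (intro eq_vecI) auto

lemma proj_aff_minus:
  assumes "x \<in> carrier_vec d" "y \<in> carrier_vec d" "m \<in> carrier_vec d"
  shows "proj_aff U m x - y = U *\<^sub>v (transpose_mat U *\<^sub>v (x - y)) - orth_resid U (y - m)"
  unfolding proj_aff_def orth_resid_def using assms orthonormal_cols_carrier
  by (intro eq_vecI) (auto simp: mult_minus_distrib_mat_vec[of _ k d] mult_minus_distrib_mat_vec[of _ d k]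
      scalar_prod_minus_distrib[of _ d])

end

lemma vmean_carrier [simp]: "vmean d T E \<in> carrier_vec d"
  unfolding vmean_def by simp

lemma scalar_prod_vmean:
  fixes v :: "real vec"
  assumes v: "v \<in> carrier_vec d" and E: "\<And>i. i \<in> T \<Longrightarrow> E i \<in> carrier_vec d"
  shows "v \<bullet> vmean d T E = (\<Sum>i\<in>T. v \<bullet> E i) / real (card T)"
proof -
  have "v \<bullet> vmean d T E = (\<Sum>j<d. \<Sum>i\<in>T. v $ j * E i $ j) / real (card T)"
    unfolding vmean_def using v
    by (simp add: scalar_prod_def lessThan_atLeast0 sum_divide_distrib sum_distrib_left)
  also have "\<dots> = (\<Sum>i\<in>T. \<Sum>j<d. v $ j * E i $ j) / real (card T)"
    by (subst sum.swap) simp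
  also have "\<dots> = (\<Sum>i\<in>T. v \<bullet> E i) / real (card T)"
  proof -
    have "(\<Sum>j<d. v $ j * E i $ j) = v \<bullet> E i" if "i \<in> T" for i
      using E[OF that] by (auto simp: scalar_prod_def lessThan_atLeast0)
    then show ?thesis by simp
  qed
  finally show ?thesis .
qed

lemma sum_scalar_prod_sub_vmean:
  fixes v :: "real vec"
  assumes v: "v \<in> carrier_vec d" and E: "\<And>i. i \<in> T \<Longrightarrow> E i \<in> carrier_vec d"
  shows "(\<Sum>i\<in>T. v \<bullet> (E i - vmean d T E)) = 0"
proof (cases "card T = 0")
  case True
  then show ?thesis by (metis card_0_eq sum.empty sum.infinite)
next
  case False
  have "(\<Sum>i\<in>T. v \<bullet> (E i - vmean d T E)) = (\<Sum>i\<in>T. v \<bullet> E i) - real (card T) * (v \<bullet> vmean d T E)"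
    using v E by (simp add: scalar_prod_minus_distrib[of _ d] sum_subtractf)
  then show ?thesis using False by (simp add: scalar_prod_vmean[OF v E])
qed

lemma vmean_affine:
  fixes V :: "real mat"
  assumes V: "V \<in> carrier_mat d r" and m: "m \<in> carrier_vec d"
    and lam: "\<And>i. i \<in> T \<Longrightarrow> lam i \<in> carrier_vec r" and T: "finite T" "T \<noteq> {}"
  shows "vmean d T (\<lambda>i. V *\<^sub>v lam i + m) = V *\<^sub>v vmean r T lam + m"
proof (rule eq_vecI)
  fix j assume "j < dim_vec (V *\<^sub>v vmean r T lam + m)"
  then have j: "j < d" using m by simp
  have rj: "row V j \<in> carrier_vec r" using V j by auto
  have "vmean d T (\<lambda>i. V *\<^sub>v lam i + m) $ j = (\<Sum>i\<in>T. row V j \<bullet> lam i) / real (card T) + m $ j"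
    unfolding vmean_def using j V m T by (simp add: sum.distrib add_divide_distrib)
  also have "\<dots> = (V *\<^sub>v vmean r T lam + m) $ j"
    using j V m scalar_prod_vmean[OF rj lam] by simp
  finally show "vmean d T (\<lambda>i. V *\<^sub>v lam i + m) $ j = (V *\<^sub>v vmean r T lam + m) $ j" .
qed (use V m in simp)

lemma sub_vmean_affine:
  fixes V :: "real mat"
  assumes V: "V \<in> carrier_mat d r" and m: "m \<in> carrier_vec d" and T: "finite T" "T \<noteq> {}"
    and lam: "\<And>i. i \<in> T \<Longrightarrow> lam i \<in> carrier_vec r"
    and E: "\<And>i. i \<in> T \<Longrightarrow> E i = V *\<^sub>v lam i + m"
    and x: "x \<in> carrier_vec r"
  shows "V *\<^sub>v x + m - vmean d T E = V *\<^sub>v (x - vmean r T lam)"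
proof -
  have "vmean d T E = vmean d T (\<lambda>i. V *\<^sub>v lam i + m)"
    unfolding vmean_def using E by (auto intro!: arg_cong[where f="Matrix.vec d"] ext sum.cong)
  also have "\<dots> = V *\<^sub>v vmean r T lam + m" by (rule vmean_affine[OF V m lam T])
  finally show ?thesis
    using V m x by (intro eq_vecI) (auto simp: mult_minus_distrib_mat_vec[of V d r])
qed

lemma vmean_dist_le:
  fixes E :: "nat \<Rightarrow> real vec"
  assumes E: "\<And>i. i \<in> T \<Longrightarrow> E i \<in> carrier_vec d" and c: "c \<in> carrier_vec d"
    and T: "finite T" "T \<noteq> {}"
    and dist: "\<And>i. i \<in> T \<Longrightarrow> (E i - c) \<bullet> (E i - c) \<le> \<delta>\<^sup>2"
  shows "(vmean d T E - c) \<bullet> (vmean d T E - c) \<le> \<delta>\<^sup>2"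
proof -
  define v where "v = vmean d T E - c"
  have v: "v \<in> carrier_vec d" unfolding v_def using c by simp
  have split: "v \<bullet> (E i - c) = v \<bullet> (E i - vmean d T E) + v \<bullet> v" if "i \<in> T" for i
    unfolding v_def using E[OF that] c
    by (simp add: scalar_prod_minus_distrib[of _ d] scalar_prod_add_distrib[of _ d]
        minus_scalar_prod_distrib[of _ d])
  have "2 * (real (card T) * (v \<bullet> v)) = (\<Sum>i\<in>T. 2 * (v \<bullet> (E i - c)))"
    using sum_scalar_prod_sub_vmean[OF v E] by (simp add: split sum.distrib sum_distrib_left[symmetric])
  also have "\<dots> \<le> (\<Sum>i\<in>T. v \<bullet> v + \<delta>\<^sup>2)"
  proof (rule sum_mono)
    fix i assume i: "i \<in> T"
    show "2 * (v \<bullet> (E i - c)) \<le> v \<bullet> v + \<delta>\<^sup>2"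
      using two_scalar_prod_le[OF v, of "E i - c"] dist[OF i] E[OF i] c by simp
  qed
  also have "\<dots> = real (card T) * (v \<bullet> v) + real (card T) * \<delta>\<^sup>2"
    by (simp add: distrib_left)
  finally have "real (card T) * (v \<bullet> v) \<le> real (card T) * \<delta>\<^sup>2" by linarith
  then show ?thesis using T unfolding v_def[symmetric] by (simp add: card_gt_0_iff)
qed

lemma dist_vmean_subset_le:
  fixes E :: "nat \<Rightarrow> real vec"
  assumes E: "\<And>i. i \<in> H \<Longrightarrow> E i \<in> carrier_vec d"
    and dist: "\<And>i. i \<in> H \<Longrightarrow> (E i - vmean d H E) \<bullet> (E i - vmean d H E) \<le> \<delta>\<^sup>2"
    and T: "T \<subseteq> H" "finite T" "T \<noteq> {}" and h: "h \<in> H"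
  shows "(E h - vmean d T E) \<bullet> (E h - vmean d T E) \<le> 4 * \<delta>\<^sup>2"
proof -
  have "E h - vmean d T E = (E h - vmean d H E) - (vmean d T E - vmean d H E)"
    using E[OF h] by (intro eq_vecI) (auto simp: vmean_def)
  then have "(E h - vmean d T E) \<bullet> (E h - vmean d T E)
      \<le> 2 * ((E h - vmean d H E) \<bullet> (E h - vmean d H E))
        + 2 * ((vmean d T E - vmean d H E) \<bullet> (vmean d T E - vmean d H E))"
    using scalar_prod_minus_self_le[of "E h - vmean d H E" d] E[OF h] by simp
  also have "\<dots> \<le> 4 * \<delta>\<^sup>2"
    using dist[OF h] vmean_dist_le[of T E d "vmean d H E" \<delta>] dist E T by (simp add: subset_iff)
  finally show ?thesis .
qed

lemma transpose_mat_of_cols_mult_vec_self: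
  fixes \<alpha> :: "nat \<Rightarrow> real vec"
  assumes xs: "distinct xs" and \<alpha>: "\<And>i. i \<in> set xs \<Longrightarrow> \<alpha> i \<in> carrier_vec r"
  shows "(transpose_mat (mat_of_cols r (map \<alpha> xs)) *\<^sub>v q) \<bullet> (transpose_mat (mat_of_cols r (map \<alpha> xs)) *\<^sub>v q)
       = (\<Sum>i\<in>set xs. (\<alpha> i \<bullet> q)\<^sup>2)"
proof -
  have "(transpose_mat (mat_of_cols r (map \<alpha> xs)) *\<^sub>v q) $ j = \<alpha> (xs ! j) \<bullet> q" if "j < length xs" for j
    using that \<alpha>[of "xs ! j"] by simp
  then have "(transpose_mat (mat_of_cols r (map \<alpha> xs)) *\<^sub>v q) \<bullet> (transpose_mat (mat_of_cols r (map \<alpha> xs)) *\<^sub>v q)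
      = (\<Sum>j<length xs. (\<alpha> (xs ! j) \<bullet> q)\<^sup>2)"
    by (simp add: scalar_prod_def power2_eq_square lessThan_atLeast0)
  also have "\<dots> = sum_list (map (\<lambda>i. (\<alpha> i \<bullet> q)\<^sup>2) xs)"
    by (simp add: sum_list_sum_nth lessThan_atLeast0)
  also have "\<dots> = (\<Sum>i\<in>set xs. (\<alpha> i \<bullet> q)\<^sup>2)"
    using xs by (simp add: sum_list_distinct_conv_sum_set)
  finally show ?thesis .
qed

lemma centered_matrix_eq_mult:
  fixes V :: "real mat"
  assumes V: "V \<in> carrier_mat d r" and T: "finite T"
    and \<alpha>: "\<And>i. i \<in> T \<Longrightarrow> \<alpha> i \<in> carrier_vec r"
    and E: "\<And>i. i \<in> T \<Longrightarrow> E i - vmean d T E = V *\<^sub>v \<alpha> i"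
  shows "centered_matrix d T E = V * mat_of_cols r (map \<alpha> (sorted_list_of_set T))"
proof -
  define xs where "xs = sorted_list_of_set T"
  have xs: "xs ! j \<in> T" if "j < length xs" for j
    using that T nth_mem[of j xs] unfolding xs_def by simp
  show ?thesis
    unfolding centered_matrix_def xs_def[symmetric]
  proof (rule eq_matI)
    fix i j assume "i < dim_row (V * mat_of_cols r (map \<alpha> xs))" "j < dim_col (V * mat_of_cols r (map \<alpha> xs))"
    then have i: "i < d" and j: "j < length xs" using V by auto
    show "mat_of_cols d (map (\<lambda>s. E s - vmean d T E) xs) $$ (i, j) = (V * mat_of_cols r (map \<alpha> xs)) $$ (i, j)"
      using i j V E[OF xs[OF j]] \<alpha>[OF xs[OF j]] by (simp add: mat_of_cols_index)
  qed (use V in auto)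
qed

text \<open>The centred matrix factors as V Z with V isometric, so it has the Gram matrix of Z.\<close>

lemma centered_matrix_coordinate_spread:
  fixes V :: "real mat"
  assumes V: "orthonormal_cols d r V" and m: "m \<in> carrier_vec d"
    and T: "finite T" "T \<noteq> {}"
    and lam: "\<And>i. i \<in> T \<Longrightarrow> lam i \<in> carrier_vec r"
    and E: "\<And>i. i \<in> T \<Longrightarrow> E i = V *\<^sub>v lam i + m"
    and r: "1 \<le> r" and \<sigma>: "0 < \<sigma>" "\<sigma> \<le> kth_singular_value (centered_matrix d T E) r"
    and q: "q \<in> carrier_vec r"
  shows "\<sigma>\<^sup>2 * (q \<bullet> q) \<le> (\<Sum>i\<in>T. ((lam i - vmean r T lam) \<bullet> q)\<^sup>2)"
proof -
  define \<alpha> where "\<alpha> i = lam i - vmean r T lam" for i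
  have Vc: "V \<in> carrier_mat d r" using orthonormal_cols_carrier[OF V] .
  have \<alpha>: "\<alpha> i \<in> carrier_vec r" if "i \<in> T" for i unfolding \<alpha>_def using lam[OF that] by simp
  have centered: "E i - vmean d T E = V *\<^sub>v \<alpha> i" if "i \<in> T" for i
    unfolding \<alpha>_def E[OF that] using sub_vmean_affine[OF Vc m T lam E lam[OF that]] .
  define Z where "Z = mat_of_cols r (map \<alpha> (sorted_list_of_set T))"
  have Z: "Z \<in> carrier_mat r (card T)" unfolding Z_def using T by (simp add: mat_of_cols_def)
  have "transpose_mat (centered_matrix d T E) * centered_matrix d T E = transpose_mat Z * Z"
  proof -
    have "transpose_mat (V * Z) * (V * Z) = transpose_mat Z * ((transpose_mat V * V) * Z)"
      using Vc Z by (simp add: transpose_mult[OF Vc Z] assoc_mult_mat[of _ _ _ _ _ _ "card T"])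
    then show ?thesis
      using centered_matrix_eq_mult[OF Vc T(1) \<alpha> centered] V Z
      unfolding Z_def[symmetric] orthonormal_cols_def by simp
  qed
  then have "\<sigma>\<^sup>2 * (q \<bullet> q) \<le> (transpose_mat Z *\<^sub>v q) \<bullet> (transpose_mat Z *\<^sub>v q)"
    using gram_quadratic_form_ge[OF Z r \<sigma>(1) _ \<sigma>(2) q] by blast
  also have "\<dots> = (\<Sum>i\<in>T. (\<alpha> i \<bullet> q)\<^sup>2)"
    unfolding Z_def using T \<alpha>
    by (subst transpose_mat_of_cols_mult_vec_self) auto
  finally show ?thesis unfolding \<alpha>_def .
qed

text \<open>With b the residual of V \<beta> and p = V^T b, Cauchy-Schwarz gives |b|^4 \<le> |\<beta>|^2 |p|^2, while
  \<sigma>^2 |p|^2 \<le> \<Sum> (\<alpha> i \<bullet> p)^2 \<le> |b|^2 \<Sum> |residual of V \<alpha> i|^2.\<close>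

lemma orth_resid_spread_bound:
  fixes U V :: "real mat"
  assumes U: "orthonormal_cols d k U" and V: "orthonormal_cols d r V"
    and \<beta>: "\<beta> \<in> carrier_vec r" and \<alpha>: "\<And>i. i \<in> T \<Longrightarrow> \<alpha> i \<in> carrier_vec r"
    and spread: "\<And>q. q \<in> carrier_vec r \<Longrightarrow> \<sigma>\<^sup>2 * (q \<bullet> q) \<le> (\<Sum>i\<in>T. (\<alpha> i \<bullet> q)\<^sup>2)"
  shows "\<sigma>\<^sup>2 * (orth_resid U (V *\<^sub>v \<beta>) \<bullet> orth_resid U (V *\<^sub>v \<beta>))
       \<le> (\<beta> \<bullet> \<beta>) * (\<Sum>i\<in>T. orth_resid U (V *\<^sub>v \<alpha> i) \<bullet> orth_resid U (V *\<^sub>v \<alpha> i))"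
proof -
  have Vc: "V \<in> carrier_mat d r" using orthonormal_cols_carrier[OF V] .
  define b where "b = orth_resid U (V *\<^sub>v \<beta>)"
  define W where "W = (\<Sum>i\<in>T. orth_resid U (V *\<^sub>v \<alpha> i) \<bullet> orth_resid U (V *\<^sub>v \<alpha> i))"
  define p where "p = transpose_mat V *\<^sub>v b"
  have b: "b \<in> carrier_vec d" unfolding b_def using U Vc \<beta> by simp
  have p: "p \<in> carrier_vec r" unfolding p_def using Vc b by simp
  have "b \<bullet> b = \<beta> \<bullet> p"
    unfolding b_def p_def using U V Vc \<beta> b
    by (simp add: orth_resid_scalar_prod comm_scalar_prod[of _ d] mult_vec_scalar_prod_transpose[symmetric])
  then have "(b \<bullet> b)\<^sup>2 \<le> (\<beta> \<bullet> \<beta>) * (p \<bullet> p)"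
    using cauchy_schwarz_scalar_prod[OF p \<beta>] by simp
  moreover have "\<sigma>\<^sup>2 * (p \<bullet> p) \<le> (b \<bullet> b) * W"
  proof -
    have "(\<alpha> i \<bullet> p)\<^sup>2 \<le> (b \<bullet> b) * (orth_resid U (V *\<^sub>v \<alpha> i) \<bullet> orth_resid U (V *\<^sub>v \<alpha> i))"
      if i: "i \<in> T" for i
    proof -
      have "\<alpha> i \<bullet> p = b \<bullet> orth_resid U (V *\<^sub>v \<alpha> i)"
        unfolding p_def b_def using U V Vc \<beta> \<alpha>[OF i] b
        by (simp add: orth_resid_scalar_prod comm_scalar_prod[of _ d] mult_vec_scalar_prod_transpose[symmetric])
      then show ?thesis
        using cauchy_schwarz_scalar_prod[of "orth_resid U (V *\<^sub>v \<alpha> i)" d b] U Vc \<alpha>[OF i] b by simp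
    qed
    then have "(\<Sum>i\<in>T. (\<alpha> i \<bullet> p)\<^sup>2) \<le> (b \<bullet> b) * W"
      unfolding W_def sum_distrib_left by (rule sum_mono)
    then show ?thesis using spread[OF p] by linarith
  qed
  ultimately have "\<sigma>\<^sup>2 * (b \<bullet> b) * (b \<bullet> b) \<le> (\<beta> \<bullet> \<beta>) * W * (b \<bullet> b)"
    using scalar_prod_self_nonneg[of \<beta>] scalar_prod_self_nonneg[of b]
    by (smt (verit, best) mult.assoc mult.commute mult_left_mono power2_eq_square zero_le_power2)
  moreover have "0 \<le> (\<beta> \<bullet> \<beta>) * W"
    unfolding W_def by (intro mult_nonneg_nonneg sum_nonneg scalar_prod_self_nonneg)
  ultimately show ?thesis
    unfolding b_def[symmetric] W_def[symmetric]
    by (cases "b \<bullet> b = 0") (auto simp: scalar_prod_self_nonneg less_le)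
qed

lemma scalar_prod_add_self_le_weighted:
  fixes a b :: "real vec"
  assumes a: "a \<in> carrier_vec n" and b: "b \<in> carrier_vec n"
    and K: "0 \<le> K" and m: "0 < m" and W: "0 \<le> W" and bW: "b \<bullet> b \<le> K * W"
  shows "(a + b) \<bullet> (a + b) \<le> (1 / m + K) * (m * (a \<bullet> a) + W)"
proof (cases "K = 0")
  case True
  then have "b = 0\<^sub>v n"
    using bW scalar_prod_self_nonneg[of b] scalar_prod_self_eq_0_iff[OF b] by simp
  then show ?thesis using True a m W by (simp add: le_divide_eq)
next
  case False
  then have Km: "0 < K * m" using K m by simp
  have "0 \<le> ((K * m) \<cdot>\<^sub>v a - b) \<bullet> ((K * m) \<cdot>\<^sub>v a - b)" by (rule scalar_prod_self_nonneg)
  also have "\<dots> = (K * m) * (K * m) * (a \<bullet> a) - 2 * (K * m) * (a \<bullet> b) + b \<bullet> b"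
    using scalar_prod_minus_self[of "(K * m) \<cdot>\<^sub>v a" n b] a b by (simp add: mult_ac)
  also have "\<dots> = (K * m) * (K * m * (a \<bullet> a) + (b \<bullet> b) / (K * m)) - (K * m) * (2 * (a \<bullet> b))"
    using False m by (simp add: algebra_simps)
  finally have "(K * m) * (2 * (a \<bullet> b)) \<le> (K * m) * (K * m * (a \<bullet> a) + (b \<bullet> b) / (K * m))"
    by simp
  then have "2 * (a \<bullet> b) \<le> K * m * (a \<bullet> a) + (b \<bullet> b) / (K * m)"
    using Km by (rule mult_left_le_imp_le)
  moreover have "(b \<bullet> b) / (K * m) \<le> W / m"
    using bW Km False K m by (simp add: divide_le_eq field_simps)
  moreover have "(1 / m + K) * (m * (a \<bullet> a) + W) = a \<bullet> a + K * m * (a \<bullet> a) + W / m + K * W"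
    using m by (simp add: field_simps)
  ultimately show ?thesis using scalar_prod_add_self[OF a b] bW by linarith
qed

lemma sum_orth_resid_offsets_vmean:
  fixes U V :: "real mat"
  assumes U: "orthonormal_cols d k U" and V: "orthonormal_cols d r V"
    and y: "y \<in> carrier_vec d" and lam: "\<And>i. i \<in> T \<Longrightarrow> lam i \<in> carrier_vec r"
  shows "(\<Sum>i\<in>T. orth_resid U y \<bullet> orth_resid U (V *\<^sub>v (lam i - vmean r T lam))) = 0"
proof -
  have Vc: "V \<in> carrier_mat d r" using orthonormal_cols_carrier[OF V] .
  define a where "a = orth_resid U y"
  have a: "a \<in> carrier_vec d" unfolding a_def using U y by simp
  have "a \<bullet> orth_resid U (V *\<^sub>v (lam i - vmean r T lam))
      = (transpose_mat V *\<^sub>v a) \<bullet> (lam i - vmean r T lam)" if i: "i \<in> T" for i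
  proof -
    have \<alpha>: "lam i - vmean r T lam \<in> carrier_vec r" using lam[OF i] by simp
    have "a \<bullet> orth_resid U (V *\<^sub>v (lam i - vmean r T lam)) = a \<bullet> (V *\<^sub>v (lam i - vmean r T lam))"
      unfolding a_def using Vc y \<alpha> by (simp add: orth_resid_scalar_prod[OF U])
    also have "\<dots> = (transpose_mat V *\<^sub>v a) \<bullet> (lam i - vmean r T lam)"
      using a Vc \<alpha> mult_vec_scalar_prod_transpose[OF V \<alpha> a]
      by (simp add: comm_scalar_prod[of _ d] comm_scalar_prod[of _ r])
    finally show ?thesis .
  qed
  then have "(\<Sum>i\<in>T. a \<bullet> orth_resid U (V *\<^sub>v (lam i - vmean r T lam)))
      = (\<Sum>i\<in>T. (transpose_mat V *\<^sub>v a) \<bullet> (lam i - vmean r T lam))" by simp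
  also have "\<dots> = 0" using Vc a lam by (intro sum_scalar_prod_sub_vmean) auto
  finally show ?thesis unfolding a_def .
qed

lemma orth_resid_affine_point_le:
  fixes U V :: "real mat" and m m0 :: "real vec" and lam :: "nat \<Rightarrow> real vec"
  assumes U: "orthonormal_cols d k U" and V: "orthonormal_cols d r V"
    and m: "m \<in> carrier_vec d" and m0: "m0 \<in> carrier_vec d"
    and T: "finite T" "T \<noteq> {}"
    and lam: "\<And>i. i \<in> insert h T \<Longrightarrow> lam i \<in> carrier_vec r"
    and spread: "\<And>q. q \<in> carrier_vec r \<Longrightarrow> \<sigma>\<^sup>2 * (q \<bullet> q) \<le> (\<Sum>i\<in>T. ((lam i - vmean r T lam) \<bullet> q)\<^sup>2)"
    and dist: "(lam h - vmean r T lam) \<bullet> (lam h - vmean r T lam) \<le> D"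
    and \<sigma>: "0 < \<sigma>"
  shows "orth_resid U (V *\<^sub>v lam h + m - m0) \<bullet> orth_resid U (V *\<^sub>v lam h + m - m0)
       \<le> (1 / real (card T) + D / \<sigma>\<^sup>2)
         * (\<Sum>i\<in>T. orth_resid U (V *\<^sub>v lam i + m - m0) \<bullet> orth_resid U (V *\<^sub>v lam i + m - m0))"
proof -
  have Vc: "V \<in> carrier_mat d r" using orthonormal_cols_carrier[OF V] .
  define c where "c = vmean r T lam"
  define \<alpha> where "\<alpha> i = lam i - c" for i
  define a where "a = orth_resid U (V *\<^sub>v c + m - m0)"
  define u where "u i = orth_resid U (V *\<^sub>v \<alpha> i)" for i
  define W where "W = (\<Sum>i\<in>T. u i \<bullet> u i)"
  have c: "c \<in> carrier_vec r" unfolding c_def by simp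
  have \<alpha>: "\<alpha> i \<in> carrier_vec r" if "i \<in> insert h T" for i unfolding \<alpha>_def using lam[OF that] c by simp
  have a: "a \<in> carrier_vec d" unfolding a_def using U Vc c m m0 by simp
  have u: "u i \<in> carrier_vec d" if "i \<in> insert h T" for i unfolding u_def using U Vc \<alpha>[OF that] by simp
  have split: "orth_resid U (V *\<^sub>v lam i + m - m0) = a + u i" if i: "i \<in> insert h T" for i
  proof -
    have "V *\<^sub>v lam i + m - m0 = (V *\<^sub>v c + m - m0) + V *\<^sub>v \<alpha> i"
      unfolding \<alpha>_def using lam[OF i] c Vc m m0
      by (intro eq_vecI) (auto simp: mult_minus_distrib_mat_vec[of V d r])
    then show ?thesis
      unfolding a_def u_def using orth_resid_add[OF U] Vc c m m0 \<alpha>[OF i] by simp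
  qed
  have cross: "(\<Sum>i\<in>T. a \<bullet> u i) = 0"
    unfolding a_def u_def \<alpha>_def c_def using Vc c m m0 lam
    by (intro sum_orth_resid_offsets_vmean[OF U V]) auto
  have sum_T: "(\<Sum>i\<in>T. orth_resid U (V *\<^sub>v lam i + m - m0) \<bullet> orth_resid U (V *\<^sub>v lam i + m - m0))
      = real (card T) * (a \<bullet> a) + W"
    using cross split a u unfolding W_def
    by (simp add: scalar_prod_add_self[of a d] sum.distrib sum_distrib_left[symmetric])
  have W: "0 \<le> W" unfolding W_def by (intro sum_nonneg scalar_prod_self_nonneg)
  have "\<sigma>\<^sup>2 * (u h \<bullet> u h) \<le> (\<alpha> h \<bullet> \<alpha> h) * W"
    unfolding u_def W_def \<alpha>_def c_def using orth_resid_spread_bound[OF U V _ _ spread] lam by simp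
  also have "\<dots> \<le> D * W" using dist W unfolding \<alpha>_def c_def by (rule mult_right_mono)
  finally have "u h \<bullet> u h \<le> D / \<sigma>\<^sup>2 * W" using \<sigma> by (simp add: field_simps)
  moreover have "0 \<le> D" using order_trans[OF scalar_prod_self_nonneg dist] .
  ultimately show ?thesis
    unfolding split[of h, simplified] sum_T
    using T by (intro scalar_prod_add_self_le_weighted[OF a u[of h] _ _ W]) auto
qed

lemma trimmed_loss_attained:
  "\<exists>S. S \<subseteq> {1..n} \<and> card S = n - f \<and>
     trimmed_loss n f g U m = (\<Sum>i\<in>S. sqnorm (g i - proj_aff U m (g i)))"
proof -
  define F where "F = {S. S \<subseteq> {1..n} \<and> card S = n - f}"
  define loss where "loss S = (\<Sum>i\<in>S. sqnorm (g i - proj_aff U m (g i)))" for S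
  have "F \<subseteq> Pow {1..n}" unfolding F_def by blast
  then have F_fin: "finite F" by (rule finite_subset) simp
  have "n - f \<le> card {1..n}" by simp
  then obtain S where "S \<subseteq> {1..n}" "card S = n - f" by (rule obtain_subset_with_card_n)
  then have "F \<noteq> {}" unfolding F_def by blast
  then have "Min (loss ` F) \<in> loss ` F" using F_fin by simp
  moreover have "trimmed_loss n f g U m = Min (loss ` F)"
    unfolding trimmed_loss_def F_def loss_def by (simp only: setcompr_eq_image)
  ultimately show ?thesis unfolding F_def loss_def by auto
qed

lemma obtain_subset_avoiding:
  assumes S: "S \<subseteq> H \<union> B" and B: "finite B" "card B \<le> f"
  obtains T where "T \<subseteq> S \<inter> H" "card T = card S - f"
proof -
  have "card S - f \<le> card (S \<inter> H)"
  proof (cases "finite S")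
    case True
    have "card S = card ((S \<inter> H) \<union> (S \<inter> B))" using S by (metis Int_Un_distrib inf.absorb1)
    also have "\<dots> \<le> card (S \<inter> H) + card (S \<inter> B)" by (rule card_Un_le)
    also have "card (S \<inter> B) \<le> card B" using B(1) by (intro card_mono) auto
    finally show ?thesis using B(2) by linarith
  qed simp
  then show ?thesis using obtain_subset_with_card_n that by (metis le_inf_iff)
qed

lemma proj_aff_error_le:
  assumes U: "orthonormal_cols d k U"
    and x: "x \<in> carrier_vec d" and y: "y \<in> carrier_vec d" and m: "m \<in> carrier_vec d"
  shows "sqnorm (proj_aff U m x - y)
       \<le> 2 * sqnorm (x - y) + 2 * (orth_resid U (y - m) \<bullet> orth_resid U (y - m))"
proof -
  have Uc: "U \<in> carrier_mat d k" using orthonormal_cols_carrier[OF U] .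
  have "sqnorm (proj_aff U m x - y)
      \<le> 2 * ((U *\<^sub>v (transpose_mat U *\<^sub>v (x - y))) \<bullet> (U *\<^sub>v (transpose_mat U *\<^sub>v (x - y))))
        + 2 * (orth_resid U (y - m) \<bullet> orth_resid U (y - m))"
    unfolding sqnorm_def proj_aff_minus[OF U x y m] using Uc x y m U
    by (intro scalar_prod_minus_self_le[of _ d]) auto
  also have "\<dots> \<le> 2 * sqnorm (x - y) + 2 * (orth_resid U (y - m) \<bullet> orth_resid U (y - m))"
    unfolding sqnorm_def using projection_self_le[OF U, of "x - y"] x y by simp
  finally show ?thesis .
qed

lemma orth_resid_perturb_le:
  assumes U: "orthonormal_cols d k U"
    and x: "x \<in> carrier_vec d" and y: "y \<in> carrier_vec d" and m: "m \<in> carrier_vec d"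
  shows "orth_resid U (y - m) \<bullet> orth_resid U (y - m)
       \<le> 2 * (orth_resid U (x - m) \<bullet> orth_resid U (x - m)) + 2 * sqnorm (x - y)"
proof -
  have "y - m = (x - m) - (x - y)" using x y m by (intro eq_vecI) auto
  then have "orth_resid U (y - m) = orth_resid U (x - m) - orth_resid U (x - y)"
    using orth_resid_minus[OF U, of "x - m" "x - y"] x y m by simp
  then have "orth_resid U (y - m) \<bullet> orth_resid U (y - m)
      \<le> 2 * (orth_resid U (x - m) \<bullet> orth_resid U (x - m))
        + 2 * (orth_resid U (x - y) \<bullet> orth_resid U (x - y))"
    using scalar_prod_minus_self_le[of "orth_resid U (x - m)" d] U x y m by simp
  then show ?thesis
    unfolding sqnorm_def using orth_resid_self_le[OF U, of "x - y"] x y by simp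
qed

lemma sum_orth_resid_le_loss:
  assumes U: "orthonormal_cols d k U" and m: "m \<in> carrier_vec d"
    and T: "T \<subseteq> S" "T \<subseteq> H" and fin: "finite S" "finite H"
    and g: "\<And>i. i \<in> S \<Longrightarrow> g i \<in> carrier_vec d" and E: "\<And>i. i \<in> H \<Longrightarrow> E i \<in> carrier_vec d"
  shows "(\<Sum>i\<in>T. orth_resid U (E i - m) \<bullet> orth_resid U (E i - m))
       \<le> 2 * (\<Sum>i\<in>S. sqnorm (g i - proj_aff U m (g i))) + 2 * (\<Sum>i\<in>H. sqnorm (g i - E i))"
proof -
  have "(\<Sum>i\<in>T. orth_resid U (E i - m) \<bullet> orth_resid U (E i - m))
      \<le> (\<Sum>i\<in>T. 2 * sqnorm (g i - proj_aff U m (g i)) + 2 * sqnorm (g i - E i))"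
  proof (rule sum_mono)
    fix i assume "i \<in> T"
    then have gi: "g i \<in> carrier_vec d" and Ei: "E i \<in> carrier_vec d" using T g E by auto
    show "orth_resid U (E i - m) \<bullet> orth_resid U (E i - m)
        \<le> 2 * sqnorm (g i - proj_aff U m (g i)) + 2 * sqnorm (g i - E i)"
      using orth_resid_perturb_le[OF U gi Ei m] residual_proj_aff[OF U gi m]
      by (simp add: sqnorm_def)
  qed
  also have "\<dots> = 2 * (\<Sum>i\<in>T. sqnorm (g i - proj_aff U m (g i))) + 2 * (\<Sum>i\<in>T. sqnorm (g i - E i))"
    by (simp add: sum.distrib sum_distrib_left)
  also have "\<dots> \<le> 2 * (\<Sum>i\<in>S. sqnorm (g i - proj_aff U m (g i))) + 2 * (\<Sum>i\<in>H. sqnorm (g i - E i))"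
  proof -
    have "(\<Sum>i\<in>T. sqnorm (g i - proj_aff U m (g i))) \<le> (\<Sum>i\<in>S. sqnorm (g i - proj_aff U m (g i)))"
      by (rule sum_mono2[OF fin(1) T(1)]) (simp add: sqnorm_def scalar_prod_self_nonneg)
    moreover have "(\<Sum>i\<in>T. sqnorm (g i - E i)) \<le> (\<Sum>i\<in>H. sqnorm (g i - E i))"
      by (rule sum_mono2[OF fin(2) T(2)]) (simp add: sqnorm_def scalar_prod_self_nonneg)
    ultimately show ?thesis by linarith
  qed
  finally show ?thesis .
qed

lemma orth_resid_le_good_subset:
  fixes V U :: "real mat" and ms m :: "real vec" and E lam :: "nat \<Rightarrow> real vec"
  assumes r: "1 \<le> r" and V: "orthonormal_cols d r V" and ms: "ms \<in> carrier_vec d"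
    and lam: "\<And>i. i \<in> H \<Longrightarrow> lam i \<in> carrier_vec r"
    and E: "\<And>i. i \<in> H \<Longrightarrow> E i = V *\<^sub>v lam i + ms"
    and E_outer: "\<And>i. i \<in> H \<Longrightarrow> (E i - vmean d H E) \<bullet> (E i - vmean d H E) \<le> \<delta>\<^sup>2"
    and T: "T \<subseteq> H" "finite T" "T \<noteq> {}"
    and \<sigma>: "0 < \<sigma>" "\<sigma> \<le> kth_singular_value (centered_matrix d T E) r"
    and U: "orthonormal_cols d k U" and m: "m \<in> carrier_vec d" and h: "h \<in> H"
  shows "orth_resid U (E h - m) \<bullet> orth_resid U (E h - m)
       \<le> (1 / real (card T) + 4 * \<delta>\<^sup>2 / \<sigma>\<^sup>2)
         * (\<Sum>i\<in>T. orth_resid U (E i - m) \<bullet> orth_resid U (E i - m))"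
proof -
  have Vc: "V \<in> carrier_mat d r" using orthonormal_cols_carrier[OF V] .
  have lam_T: "\<And>i. i \<in> insert h T \<Longrightarrow> lam i \<in> carrier_vec r"
    and E_T: "\<And>i. i \<in> insert h T \<Longrightarrow> E i = V *\<^sub>v lam i + ms" using lam E T h by auto
  have "E h - vmean d T E = V *\<^sub>v (lam h - vmean r T lam)"
    using sub_vmean_affine[OF Vc ms T(2,3) _ _ lam_T[of h]] lam_T E_T by simp
  then have "(lam h - vmean r T lam) \<bullet> (lam h - vmean r T lam) = (E h - vmean d T E) \<bullet> (E h - vmean d T E)"
    using lam_T[of h] by (simp add: mult_vec_scalar_prod_mult_vec[OF V])
  also have "\<dots> \<le> 4 * \<delta>\<^sup>2"
    using dist_vmean_subset_le[OF _ E_outer T h] E lam Vc ms by simp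
  finally have dist: "(lam h - vmean r T lam) \<bullet> (lam h - vmean r T lam) \<le> 4 * \<delta>\<^sup>2" .
  have spread: "\<sigma>\<^sup>2 * (q \<bullet> q) \<le> (\<Sum>i\<in>T. ((lam i - vmean r T lam) \<bullet> q)\<^sup>2)"
    if "q \<in> carrier_vec r" for q
    by (rule centered_matrix_coordinate_spread[OF V ms T(2,3) _ _ r \<sigma> that]) (use lam_T E_T in auto)
  show ?thesis
    using orth_resid_affine_point_le[OF U V ms m T(2,3) lam_T spread dist \<sigma>(1)] E_T by simp
qed

lemma projection_error_bound:
  fixes V U :: "real mat" and ms m :: "real vec" and E g :: "nat \<Rightarrow> real vec"
  assumes r: "1 \<le> r" and n2f: "1 \<le> n - 2 * f"
    and part: "H \<union> B = {1..n}" and card_B: "card B \<le> f"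
    and g: "\<And>i. i \<in> {1..n} \<Longrightarrow> g i \<in> carrier_vec d"
    and V: "orthonormal_cols d r V" and ms: "ms \<in> carrier_vec d"
    and E_sub: "\<And>i. i \<in> H \<Longrightarrow> E i \<in> aff_set V ms"
    and E_outer: "\<And>i. i \<in> H \<Longrightarrow> (E i - vmean d H E) \<bullet> (E i - vmean d H E) \<le> \<delta>\<^sup>2"
    and \<sigma>: "0 < \<sigma>"
    and E_sing: "\<And>S. S \<subseteq> H \<Longrightarrow> card S = n - 2 * f \<Longrightarrow>
                   \<sigma> \<le> kth_singular_value (centered_matrix d S E) r"
    and U: "orthonormal_cols d k U" and m: "m \<in> carrier_vec d" and h: "h \<in> H"
  shows "sqnorm (proj_aff U m (g h) - E h)
       \<le> 2 * sqnorm (g h - E h)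
         + 4 * (1 / real (n - 2 * f) + 4 * \<delta>\<^sup>2 / \<sigma>\<^sup>2)
             * (trimmed_loss n f g U m + (\<Sum>i\<in>H. sqnorm (g i - E i)))"
proof -
  define C where "C = 1 / real (n - 2 * f) + 4 * \<delta>\<^sup>2 / \<sigma>\<^sup>2"
  have "\<forall>i\<in>H. \<exists>l. l \<in> carrier_vec r \<and> E i = V *\<^sub>v l + ms"
    using E_sub orthonormal_cols_carrier[OF V] unfolding aff_set_def by auto
  then obtain lam where lam: "\<And>i. i \<in> H \<Longrightarrow> lam i \<in> carrier_vec r \<and> E i = V *\<^sub>v lam i + ms"
    by metis
  then have E: "\<And>i. i \<in> H \<Longrightarrow> E i \<in> carrier_vec d"
    using orthonormal_cols_carrier[OF V] ms by auto
  obtain S where S: "S \<subseteq> {1..n}" "card S = n - f"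
    and loss: "trimmed_loss n f g U m = (\<Sum>i\<in>S. sqnorm (g i - proj_aff U m (g i)))"
    using trimmed_loss_attained by blast
  have HB: "H \<subseteq> {1..n}" "B \<subseteq> {1..n}" using part by auto
  then have fin: "finite S" "finite H" "finite B"
    using S(1) by (auto intro: finite_subset)
  obtain T where T: "T \<subseteq> S \<inter> H" "card T = n - 2 * f"
  proof (rule obtain_subset_avoiding[of S H B f])
    show "S \<subseteq> H \<union> B" using S part by simp
  qed (use fin card_B S in auto)
  have T_ne: "finite T" "T \<noteq> {}"
    using T n2f fin finite_subset[of T S] by auto
  have "orth_resid U (E h - m) \<bullet> orth_resid U (E h - m)
      \<le> C * (\<Sum>i\<in>T. orth_resid U (E i - m) \<bullet> orth_resid U (E i - m))"
    unfolding C_def T(2)[symmetric] using T E_sing[of T] lam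
    by (intro orth_resid_le_good_subset[OF r V ms _ _ E_outer _ T_ne \<sigma> _ U m h]) auto
  also have "\<dots> \<le> C * (2 * trimmed_loss n f g U m + 2 * (\<Sum>i\<in>H. sqnorm (g i - E i)))"
    unfolding loss C_def using S T g E fin
    by (intro mult_left_mono sum_orth_resid_le_loss[OF U m]) auto
  finally have "orth_resid U (E h - m) \<bullet> orth_resid U (E h - m)
      \<le> 2 * (C * (trimmed_loss n f g U m + (\<Sum>i\<in>H. sqnorm (g i - E i))))"
    by (simp add: algebra_simps)
  moreover have "g h \<in> carrier_vec d" using g h HB(1) by blast
  ultimately show ?thesis
    using proj_aff_error_le[OF U _ E[OF h] m, of "g h"] unfolding C_def[symmetric] by linarith
qed

lemma integral_le_of_pointwise_bound:
  fixes M :: "'w measure" and F L :: "'w \<Rightarrow> real" and X :: "'w \<Rightarrow> nat \<Rightarrow> real"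
  assumes F_le: "\<And>\<omega>. \<omega> \<in> space M \<Longrightarrow> F \<omega> \<le> 2 * X \<omega> h + 4 * C * (L \<omega> + (\<Sum>i\<in>H. X \<omega> i))"
    and F_nonneg: "\<And>\<omega>. 0 \<le> F \<omega>" and F_meas: "F \<in> borel_measurable M"
    and X_int: "\<And>i. i \<in> H \<Longrightarrow> integrable M (\<lambda>\<omega>. X \<omega> i)"
    and X_le: "\<And>i. i \<in> H \<Longrightarrow> integral\<^sup>L M (\<lambda>\<omega>. X \<omega> i) \<le> e"
    and L_int: "integrable M L" and C: "0 \<le> C" and h: "h \<in> H"
  shows "integral\<^sup>L M F \<le> 2 * e + 4 * C * (integral\<^sup>L M L + real (card H) * e)"
proof -
  define R where "R \<omega> = 2 * X \<omega> h + 4 * C * (L \<omega> + (\<Sum>i\<in>H. X \<omega> i))" for \<omega>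
  have R_int: "integrable M R" unfolding R_def using X_int h L_int by auto
  have "integrable M F"
    by (rule Bochner_Integration.integrable_bound[OF R_int F_meas])
      (use F_le F_nonneg in \<open>auto intro!: AE_I2 simp: R_def intro: order_trans[OF _ abs_ge_self]\<close>)
  then have "integral\<^sup>L M F \<le> integral\<^sup>L M R"
    using R_int F_le unfolding R_def by (intro integral_mono) auto
  also have "\<dots> = 2 * integral\<^sup>L M (\<lambda>\<omega>. X \<omega> h)
      + 4 * C * (integral\<^sup>L M L + (\<Sum>i\<in>H. integral\<^sup>L M (\<lambda>\<omega>. X \<omega> i)))"
    unfolding R_def using X_int h L_int by (simp add: integral_sum)
  also have "\<dots> \<le> 2 * e + 4 * C * (integral\<^sup>L M L + real (card H) * e)"
    using X_le[OF h] sum_mono[of H _ "\<lambda>_. e", OF X_le] C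
    by (intro add_mono mult_left_mono) auto
  finally show ?thesis .
qed

theorem mainTheorem8:
  fixes n f c d :: nat
    and H B :: "nat set"
    and Eg :: "nat \<Rightarrow> real vec"
    and g :: "nat \<Rightarrow> real vec"
    and \<delta> \<sigma> :: real
  assumes c2: "c \<ge> 2" and dc: "d \<ge> c" and f_pos: "f \<ge> 1" and n2f: "n - 2 * f \<ge> 1"
    and part: "H \<union> B = {1..n}" "H \<inter> B = {}" and cardB: "card B \<le> f"
    and Eg_dim: "\<forall>i\<in>H. Eg i \<in> carrier_vec d"
    and g_dim: "\<forall>i\<in>{1..n}. g i \<in> carrier_vec d"
    and A_sub: "\<exists>U m. orthonormal_cols d (c - 1) U \<and> m \<in> carrier_vec d \<and>
                       (\<forall>i\<in>H. Eg i \<in> aff_set U m)"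
    and A_outer: "\<forall>i\<in>H. sqrt (sqnorm (Eg i - vmean d H Eg)) \<le> \<delta>"
    and \<sigma>_pos: "\<sigma> > 0"
    and A_sing: "\<forall>S. S \<subseteq> H \<and> card S = n - 2 * f \<longrightarrow>
                   kth_singular_value (centered_matrix d S Eg) (c - 1) \<ge> \<sigma>"
  shows
    "(\<forall>k U m h. orthonormal_cols d k U \<and> m \<in> carrier_vec d \<and> h \<in> H \<longrightarrow>
        sqnorm (proj_aff U m (g h) - Eg h)
          \<le> 2 * sqnorm (g h - Eg h)
            + 4 * (1 / real (n - 2 * f) + 4 * \<delta>\<^sup>2 / \<sigma>\<^sup>2)
                * (trimmed_loss n f g U m + (\<Sum>i\<in>H. sqnorm (g i - Eg i))))
     \<and>
     (\<forall>(M :: 'w measure) G Pk PU Pm \<epsilon> h.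
        prob_space M
        \<and> (\<forall>\<omega>\<in>space M. (\<forall>i\<in>{1..n}. G \<omega> i \<in> carrier_vec d)
                       \<and> orthonormal_cols d (Pk \<omega>) (PU \<omega>) \<and> Pm \<omega> \<in> carrier_vec d)
        \<and> (\<forall>i\<in>H. \<forall>j<d. integrable M (\<lambda>\<omega>. G \<omega> i $ j)
                         \<and> Eg i $ j = integral\<^sup>L M (\<lambda>\<omega>. G \<omega> i $ j))
        \<and> (\<forall>i\<in>H. integrable M (\<lambda>\<omega>. sqnorm (G \<omega> i - Eg i))
                  \<and> integral\<^sup>L M (\<lambda>\<omega>. sqnorm (G \<omega> i - Eg i)) \<le> \<epsilon>\<^sup>2)
        \<and> integrable M (\<lambda>\<omega>. trimmed_loss n f (G \<omega>) (PU \<omega>) (Pm \<omega>))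
        \<and> (\<lambda>\<omega>. sqnorm (proj_aff (PU \<omega>) (Pm \<omega>) (G \<omega> h) - Eg h)) \<in> borel_measurable M
        \<and> h \<in> H
        \<longrightarrow>
        integral\<^sup>L M (\<lambda>\<omega>. sqnorm (proj_aff (PU \<omega>) (Pm \<omega>) (G \<omega> h) - Eg h))
          \<le> 2 * \<epsilon>\<^sup>2
            + 4 * (1 / real (n - 2 * f) + 4 * \<delta>\<^sup>2 / \<sigma>\<^sup>2)
                * (integral\<^sup>L M (\<lambda>\<omega>. trimmed_loss n f (G \<omega>) (PU \<omega>) (Pm \<omega>))
                   + real (card H) * \<epsilon>\<^sup>2))"
proof -
  \<comment> \<open>Not needed: d \<ge> c, f \<ge> 1, disjointness of H and B, Eg_dim, prob_space M and
    the unbiasedness of G.\<close>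
  obtain V ms where V: "orthonormal_cols d (c - 1) V" "ms \<in> carrier_vec d"
    and E_sub: "\<And>i. i \<in> H \<Longrightarrow> Eg i \<in> aff_set V ms" using A_sub by blast
  have outer: "(Eg i - vmean d H Eg) \<bullet> (Eg i - vmean d H Eg) \<le> \<delta>\<^sup>2" if "i \<in> H" for i
    using A_outer that sqrt_le_D unfolding sqnorm_def by blast
  have r: "1 \<le> c - 1" using c2 by simp
  note bound = projection_error_bound[OF r n2f part(1) cardB _ V E_sub outer \<sigma>_pos]
  have C: "0 \<le> 1 / real (n - 2 * f) + 4 * \<delta>\<^sup>2 / \<sigma>\<^sup>2" by simp
  show ?thesis
    apply (intro conjI allI impI)
    subgoal using g_dim A_sing by (intro bound) auto
    subgoal for M G Pk PU Pm \<epsilon> j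
      apply (rule integral_le_of_pointwise_bound[where X = "\<lambda>\<omega> i. sqnorm (G \<omega> i - Eg i)" and h = j,
            OF _ _ _ _ _ _ C])
      subgoal using A_sing by (intro bound) auto
      by (auto simp: sqnorm_nonneg)
    done
qed

end
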